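(* Let $\mathbb{K}$ be a non-Archimedean valued field, $G$ a normed $\mathbb{K}$-amenable totally disconnected locally compact group, and $E$ a dual normed $\mathbb{K}[G]$-module. Then $H^n_{lucb}(G, E) = 0$ for all $n \geq 1$.
   Context: A non-Archimedean valued field is a field with an absolute value satisfying the ultrametric inequality. A normed $\mathbb{K}$-vector space has a norm with $\|x\|=0$ iff $x=0$, $\|x+y\|\le\max\{\|x\|,\|y\|\}$, $\|\alpha x\|=|\alpha|_\mathbb{K}\|x\|$. A normed $\mathbb{K}[G]$-module is a normed $\mathbb{K}$-vector space with an action of $G$ by linear isometries (no continuity assumed). Duals carry the operator norm $\|T\|_{op}=\inf\{C\ge0:|Tx|_\mathbb{K}\le C\|x\|\}$ and the dual action $(g\cdot\lambda)(x)=\lambda(g^{-1}x)$; a dual normed $\mathbb{K}[G]$-module is one isometrically $G$-isomorphic to the dual of a normed $\mathbb{K}[G]$-module. A map $f:G^{n+1}\to E$ is left uniformly continuous if for every $\varepsilon>0$ there is a neighbourhood $U$ of the identity in $G^{n+1}$ with $\|f(x)-f(ux)\|<\varepsilon$ for all $x\in G^{n+1}$, $u\in U$. $LUC^n_b(G,E)$ is the space of bounded left uniformly continuous maps $G^{n+1}\to E$, with action $(g\cdot f)(g_0,\dots,g_n)=g\cdot f(g^{-1}g_0,\dots,g^{-1}g_n)$ and coboundary $\delta^nf(g_0,\dots,g_{n+1})=\sum_{i=0}^{n+1}(-1)^if(g_0,\dots,\widehat{g_i},\dots,g_{n+1})$; $H^\bullet_{lucb}(G,E)$ is the cohomology of the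 complex of $G$-invariants $LUC^\bullet_b(G,E)^G$. $C_b(G,\mathbb{K})$: continuous bounded functions $G\to\mathbb{K}$ with sup norm, $(g\cdot f)(x)=f(g^{-1}x)$. $G$ is normed $\mathbb{K}$-amenable if there exists a bounded linear map $m:C_b(G,\mathbb{K})\to\mathbb{K}$ with $m(\mathbbm{1}_G)=1$ and $m(g\cdot f)=m(f)$ for all $g,f$. *)

theory Defs
  imports "HOL-Analysis.Analysis" "HOL-Algebra.Group"
begin

definition nonarch_abs :: "('k::field \<Rightarrow> real) \<Rightarrow> bool" where
  "nonarch_abs av \<longleftrightarrow>
     (\<forall>x. 0 \<le> av x) \<and> (\<forall>x. av x = 0 \<longleftrightarrow> x = 0) \<and>
     (\<forall>x y. av (x * y) = av x * av y) \<and>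
     (\<forall>x y. av (x + y) \<le> max (av x) (av y))"

text \<open>The vector space is the whole type 'e, scalar multiplication is sc.\<close>

definition normed_KVS ::
  "('k::field \<Rightarrow> real) \<Rightarrow> ('k \<Rightarrow> 'e::ab_group_add \<Rightarrow> 'e) \<Rightarrow> ('e \<Rightarrow> real) \<Rightarrow> bool" where
  "normed_KVS av sc nm \<longleftrightarrow> vector_space sc \<and>
     (\<forall>x. nm x = 0 \<longleftrightarrow> x = 0) \<and>
     (\<forall>x y. nm (x + y) \<le> max (nm x) (nm y)) \<and>
     (\<forall>a x. nm (sc a x) = av a * nm x)"

text \<open>Action of the group G (HOL-Algebra) by linear isometries; no continuity.\<close>

definition normed_KG_module ::
  "('g, 'm) monoid_scheme \<Rightarrow> ('k::field \<Rightarrow> real) \<Rightarrow> ('k \<Rightarrow> 'e::ab_group_add \<Rightarrow> 'e)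
     \<Rightarrow> ('e \<Rightarrow> real) \<Rightarrow> ('g \<Rightarrow> 'e \<Rightarrow> 'e) \<Rightarrow> bool" where
  "normed_KG_module G av sc nm act \<longleftrightarrow> normed_KVS av sc nm \<and>
     (\<forall>x. act (one G) x = x) \<and>
     (\<forall>g\<in>carrier G. \<forall>h\<in>carrier G. \<forall>x. act (mult G g h) x = act g (act h x)) \<and>
     (\<forall>g\<in>carrier G. \<forall>x y. act g (x + y) = act g x + act g y) \<and>
     (\<forall>g\<in>carrier G. \<forall>a x. act g (sc a x) = sc a (act g x)) \<and>
     (\<forall>g\<in>carrier G. \<forall>x. nm (act g x) = nm x)"

definition K_linear :: "('k::field \<Rightarrow> 'v::ab_group_add \<Rightarrow> 'v) \<Rightarrow> ('v \<Rightarrow> 'k) \<Rightarrow> bool" where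
  "K_linear sc l \<longleftrightarrow> (\<forall>x y. l (x + y) = l x + l y) \<and> (\<forall>a x. l (sc a x) = a * l x)"

definition dual_space ::
  "('k::field \<Rightarrow> real) \<Rightarrow> ('k \<Rightarrow> 'v::ab_group_add \<Rightarrow> 'v) \<Rightarrow> ('v \<Rightarrow> real) \<Rightarrow> ('v \<Rightarrow> 'k) set" where
  "dual_space av sc nm = {l. K_linear sc l \<and> (\<exists>C\<ge>0. \<forall>x. av (l x) \<le> C * nm x)}"

definition op_norm :: "('k \<Rightarrow> real) \<Rightarrow> ('v \<Rightarrow> real) \<Rightarrow> ('v \<Rightarrow> 'k) \<Rightarrow> real" where
  "op_norm av nm l = Inf {C. C \<ge> 0 \<and> (\<forall>x. av (l x) \<le> C * nm x)}"

definition dual_act :: "('g, 'm) monoid_scheme \<Rightarrow> ('g \<Rightarrow> 'v \<Rightarrow> 'v) \<Rightarrow> 'g \<Rightarrow> ('v \<Rightarrow> 'k) \<Rightarrow> ('v \<Rightarrow> 'k)" where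
  "dual_act G act g l = (\<lambda>x. l (act (m_inv G g) x))"

text \<open>E (norm nE, action actE) is a dual normed K[G]-module, witnessed by the normed
  K[G]-module V and an isometric G-equivariant linear isomorphism Phi from E onto V'.\<close>

definition dual_KG_module_via ::
  "('g, 'm) monoid_scheme \<Rightarrow> ('k::field \<Rightarrow> real)
    \<Rightarrow> ('k \<Rightarrow> 'e::ab_group_add \<Rightarrow> 'e) \<Rightarrow> ('e \<Rightarrow> real) \<Rightarrow> ('g \<Rightarrow> 'e \<Rightarrow> 'e)
    \<Rightarrow> ('k \<Rightarrow> 'v::ab_group_add \<Rightarrow> 'v) \<Rightarrow> ('v \<Rightarrow> real) \<Rightarrow> ('g \<Rightarrow> 'v \<Rightarrow> 'v)
    \<Rightarrow> ('e \<Rightarrow> ('v \<Rightarrow> 'k)) \<Rightarrow> bool" where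
  "dual_KG_module_via G av scE nE actE scV nV actV Phi \<longleftrightarrow>
     normed_KG_module G av scE nE actE \<and> normed_KG_module G av scV nV actV \<and>
     bij_betw Phi UNIV (dual_space av scV nV) \<and>
     (\<forall>a b. Phi (a + b) = (\<lambda>x. Phi a x + Phi b x)) \<and>
     (\<forall>c a. Phi (scE c a) = (\<lambda>x. c * Phi a x)) \<and>
     (\<forall>a. nE a = op_norm av nV (Phi a)) \<and>
     (\<forall>g\<in>carrier G. \<forall>a. Phi (actE g a) = dual_act G actV g (Phi a))"

definition totally_disconnected_space :: "'a topology \<Rightarrow> bool" where
  "totally_disconnected_space T \<longleftrightarrow>
     (\<forall>S. S \<subseteq> topspace T \<and> connectedin T S \<longrightarrow> (\<exists>a. S \<subseteq> {a}))"

definition topological_group :: "('g, 'm) monoid_scheme \<Rightarrow> 'g topology \<Rightarrow> bool" where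
  "topological_group G T \<longleftrightarrow> group G \<and> topspace T = carrier G \<and>
     continuous_map (prod_topology T T) T (\<lambda>(x, y). mult G x y) \<and>
     continuous_map T T (m_inv G)"

definition Cb_K :: "('g, 'm) monoid_scheme \<Rightarrow> 'g topology \<Rightarrow> ('k::field \<Rightarrow> real) \<Rightarrow> ('g \<Rightarrow> 'k) set" where
  "Cb_K G T av = {f.
     (\<forall>x\<in>carrier G. \<forall>\<epsilon>>0. \<exists>U. openin T U \<and> x \<in> U \<and> (\<forall>y\<in>U. av (f y - f x) < \<epsilon>)) \<and>
     (\<exists>C. \<forall>x\<in>carrier G. av (f x) \<le> C)}"

definition sup_norm :: "('g, 'm) monoid_scheme \<Rightarrow> ('k \<Rightarrow> real) \<Rightarrow> ('g \<Rightarrow> 'k) \<Rightarrow> real" where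
  "sup_norm G av f = (SUP x\<in>carrier G. av (f x))"

definition normed_K_amenable :: "('g, 'm) monoid_scheme \<Rightarrow> 'g topology \<Rightarrow> ('k::field \<Rightarrow> real) \<Rightarrow> bool" where
  "normed_K_amenable G T av \<longleftrightarrow> (\<exists>m :: ('g \<Rightarrow> 'k) \<Rightarrow> 'k.
     (\<forall>f\<in>Cb_K G T av. \<forall>h\<in>Cb_K G T av. m (\<lambda>x. f x + h x) = m f + m h) \<and>
     (\<forall>c. \<forall>f\<in>Cb_K G T av. m (\<lambda>x. c * f x) = c * m f) \<and>
     (\<exists>C. \<forall>f\<in>Cb_K G T av. av (m f) \<le> C * sup_norm G av f) \<and>
     m (\<lambda>_. 1) = 1 \<and>
     (\<forall>g\<in>carrier G. \<forall>f\<in>Cb_K G T av. m (\<lambda>x. f (mult G (m_inv G g) x)) = m f))"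

text \<open>G^(n+1) is represented as the extensional functions {..n} -> carrier G,
  the topspace of the product topology.\<close>

abbreviation Gpow :: "('g, 'm) monoid_scheme \<Rightarrow> nat \<Rightarrow> (nat \<Rightarrow> 'g) set" where
  "Gpow G n \<equiv> PiE {..n} (\<lambda>_. carrier G)"

definition LUCb ::
  "('g, 'm) monoid_scheme \<Rightarrow> 'g topology \<Rightarrow> ('e::ab_group_add \<Rightarrow> real) \<Rightarrow> nat
     \<Rightarrow> ((nat \<Rightarrow> 'g) \<Rightarrow> 'e) set" where
  "LUCb G T nE n = {f.
     (\<exists>C. \<forall>x\<in>Gpow G n. nE (f x) \<le> C) \<and>
     (\<forall>\<epsilon>>0. \<exists>U. openin (product_topology (\<lambda>_. T) {..n}) U \<and>
          (\<lambda>i\<in>{..n}. one G) \<in> U \<and>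
          (\<forall>x\<in>Gpow G n. \<forall>u\<in>U. nE (f x - f (\<lambda>i\<in>{..n}. mult G (u i) (x i))) < \<epsilon>))}"

definition G_invariant_cochain ::
  "('g, 'm) monoid_scheme \<Rightarrow> ('g \<Rightarrow> 'e \<Rightarrow> 'e) \<Rightarrow> nat \<Rightarrow> ((nat \<Rightarrow> 'g) \<Rightarrow> 'e) \<Rightarrow> bool" where
  "G_invariant_cochain G act n f \<longleftrightarrow>
     (\<forall>g\<in>carrier G. \<forall>x\<in>Gpow G n. act g (f (\<lambda>i\<in>{..n}. mult G (m_inv G g) (x i))) = f x)"

definition delete_coord :: "nat \<Rightarrow> nat \<Rightarrow> (nat \<Rightarrow> 'g) \<Rightarrow> (nat \<Rightarrow> 'g)" where
  "delete_coord n i x = (\<lambda>j\<in>{..n}. if j < i then x j else x (Suc j))"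

definition coboundary :: "nat \<Rightarrow> ((nat \<Rightarrow> 'g) \<Rightarrow> 'e::ab_group_add) \<Rightarrow> (nat \<Rightarrow> 'g) \<Rightarrow> 'e" where
  "coboundary n f x = (\<Sum>i\<in>{..Suc n}.
      (if even i then f (delete_coord n i x) else - f (delete_coord n i x)))"

text \<open>H^n_lucb(G,E) = 0 for n >= 1: every G-invariant bounded LUC n-cocycle is the
  coboundary of a G-invariant bounded LUC (n-1)-cochain (equalities on G^(n+2), G^(n+1)).\<close>

definition lucb_cohomology_vanishes ::
  "('g, 'm) monoid_scheme \<Rightarrow> 'g topology \<Rightarrow> ('e::ab_group_add \<Rightarrow> real) \<Rightarrow> ('g \<Rightarrow> 'e \<Rightarrow> 'e)
     \<Rightarrow> nat \<Rightarrow> bool" where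
  "lucb_cohomology_vanishes G T nE act n \<longleftrightarrow>
     (\<forall>f\<in>LUCb G T nE n. G_invariant_cochain G act n f \<longrightarrow>
        (\<forall>x\<in>Gpow G (Suc n). coboundary n f x = 0) \<longrightarrow>
        (\<exists>h\<in>LUCb G T nE (n - 1). G_invariant_cochain G act (n - 1) h \<and>
           (\<forall>x\<in>Gpow G n. f x = coboundary (n - 1) h x)))"

end

theory Submission
  imports Defs
begin

text \<open>An invariant mean m on C_b(G, K) can be integrated weak-star against bounded continuous
  families F : G \<rightarrow> E: the functional v \<mapsto> m(k \<mapsto> \<langle>F k, v\<rangle>) is bounded on V, hence it is
  the image under Phi of a unique element, the average of F. Averaging is linear, bounded by
  C \<cdot> sup \<parallel>F\<parallel>, and G-equivariant because m is invariant. Prepending a coordinate k contracts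
  the standard resolution: for a cocycle f one has f = \<delta>(f(k, -)) for every k, so averaging over
  k gives f = \<delta>h with h(x) = avg_k f(k, x), and h inherits boundedness, left uniform continuity
  and G-invariance from f.\<close>

lemma nonarch_abs_one:
  assumes "nonarch_abs av"
  shows "av 1 = 1"
proof -
  have "av 1 = av 1 * av 1" "av 1 \<noteq> 0"
    using assms unfolding nonarch_abs_def by (metis mult_1, simp)
  then show ?thesis by simp
qed

lemma nonarch_abs_minus:
  assumes "nonarch_abs av"
  shows "av (- x) = av x"
proof -
  have mult: "av (a * b) = av a * av b" and nonneg: "0 \<le> av a" for a b
    using assms unfolding nonarch_abs_def by auto
  have "(av (-1) - 1) * (av (-1) + 1) = 0"
    using mult[of "-1" "-1"] nonarch_abs_one[OF assms] by (simp add: algebra_simps)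
  then have "av (-1) = 1"
    using nonneg[of "-1"] by simp
  then show ?thesis
    using mult[of "-1" x] by simp
qed

definition ultrametric :: "('a::ab_group_add \<Rightarrow> real) \<Rightarrow> bool" where
  "ultrametric nm \<longleftrightarrow> nm 0 = 0 \<and> (\<forall>x y. nm (x - y) \<le> max (nm x) (nm y))"

lemma ultrametricD:
  assumes "ultrametric nm"
  shows "nm 0 = 0" and "nm (x - y) \<le> max (nm x) (nm y)"
  using assms unfolding ultrametric_def by blast+

lemma ultrametric_nonneg: "ultrametric nm \<Longrightarrow> 0 \<le> nm x"
  using ultrametricD(2)[of nm x x] ultrametricD(1)[of nm] by simp

lemma ultrametric_minus:
  assumes "ultrametric nm"
  shows "nm (- x) = nm x"
proof -
  have "nm (- a) \<le> nm a" for a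
    using ultrametricD(1)[OF assms] ultrametricD(2)[OF assms, of 0 a] ultrametric_nonneg[OF assms, of a]
    by simp
  from this[of x] this[of "- x"] show ?thesis by simp
qed

lemma ultrametric_diff_commute: "ultrametric nm \<Longrightarrow> nm (x - y) = nm (y - x)"
  using ultrametric_minus[of nm "y - x"] by simp

lemma nonarch_abs_ultrametric: "nonarch_abs av \<Longrightarrow> ultrametric av"
  unfolding ultrametric_def
  by (metis (no_types) diff_conv_add_uminus nonarch_abs_def nonarch_abs_minus)

lemma normed_KVS_minus:
  assumes "nonarch_abs av" "normed_KVS av sc nm"
  shows "nm (- x) = nm x"
proof -
  interpret vector_space sc
    using assms(2) unfolding normed_KVS_def by blast
  have "nm (sc (-1) x) = av (-1) * nm x"
    using assms(2) unfolding normed_KVS_def by blast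
  then show ?thesis
    using nonarch_abs_minus[OF assms(1)] nonarch_abs_one[OF assms(1)] by (simp add: scale_minus_left)
qed

lemma normed_KVS_ultrametric:
  assumes "nonarch_abs av" "normed_KVS av sc nm"
  shows "ultrametric nm"
  unfolding ultrametric_def
  using assms normed_KVS_minus[OF assms] unfolding normed_KVS_def
  by (metis diff_conv_add_uminus)

definition Cb :: "('g, 'm) monoid_scheme \<Rightarrow> 'g topology \<Rightarrow> ('a::ab_group_add \<Rightarrow> real) \<Rightarrow> ('g \<Rightarrow> 'a) set" where
  "Cb G T nm = {f.
     (\<forall>x\<in>carrier G. \<forall>\<epsilon>>0. \<exists>U. openin T U \<and> x \<in> U \<and> (\<forall>y\<in>U. nm (f y - f x) < \<epsilon>)) \<and>
     (\<exists>B. \<forall>x\<in>carrier G. nm (f x) \<le> B)}"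

lemma Cb_K_eq_Cb: "Cb_K G T av = Cb G T av"
  unfolding Cb_K_def Cb_def ..

lemma CbD:
  assumes "f \<in> Cb G T nm"
  shows "x \<in> carrier G \<Longrightarrow> \<epsilon> > 0 \<Longrightarrow> \<exists>U. openin T U \<and> x \<in> U \<and> (\<forall>y\<in>U. nm (f y - f x) < \<epsilon>)"
    and "\<exists>B. \<forall>x\<in>carrier G. nm (f x) \<le> B"
  using assms unfolding Cb_def by blast+

lemma Cb_const:
  assumes "ultrametric nm" "carrier G \<subseteq> topspace T"
  shows "(\<lambda>_. c) \<in> Cb G T nm"
  unfolding Cb_def using assms ultrametricD(1)[OF assms(1)] by (auto intro!: exI[of _ "topspace T"])

lemma Cb_diff:
  assumes "ultrametric nm" "f \<in> Cb G T nm" "h \<in> Cb G T nm"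
  shows "(\<lambda>x. f x - h x) \<in> Cb G T nm"
proof -
  have "\<exists>U. openin T U \<and> x \<in> U \<and> (\<forall>y\<in>U. nm ((f y - h y) - (f x - h x)) < \<epsilon>)"
    if x: "x \<in> carrier G" and "\<epsilon> > 0" for x \<epsilon>
  proof -
    obtain U V where U: "openin T U" "x \<in> U" "\<forall>y\<in>U. nm (f y - f x) < \<epsilon>"
      and V: "openin T V" "x \<in> V" "\<forall>y\<in>V. nm (h y - h x) < \<epsilon>"
      using CbD(1)[OF assms(2) x] CbD(1)[OF assms(3) x] \<open>\<epsilon> > 0\<close> by metis
    have "nm ((f y - h y) - (f x - h x)) < \<epsilon>" if "y \<in> U \<inter> V" for y
    proof -
      have "(f y - h y) - (f x - h x) = (f y - f x) - (h y - h x)"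
        by (simp add: algebra_simps)
      moreover have "nm ((f y - f x) - (h y - h x)) < \<epsilon>"
        using ultrametricD(2)[OF assms(1), of "f y - f x" "h y - h x"] U(3) V(3) that
        by (meson IntD1 IntD2 le_less_trans max_less_iff_conj)
      ultimately show ?thesis
        by (simp only:)
    qed
    then show ?thesis
      using U V by (intro exI[of _ "U \<inter> V"]) auto
  qed
  moreover obtain B1 B2 where "\<forall>x\<in>carrier G. nm (f x) \<le> B1" "\<forall>x\<in>carrier G. nm (h x) \<le> B2"
    using CbD(2)[OF assms(2)] CbD(2)[OF assms(3)] by metis
  then have "\<forall>x\<in>carrier G. nm (f x - h x) \<le> max B1 B2"
    using ultrametricD(2)[OF assms(1)] by (meson max.mono order_trans)
  ultimately show ?thesis
    unfolding Cb_def by blast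
qed

lemma Cb_minus:
  assumes "ultrametric nm" "carrier G \<subseteq> topspace T" "f \<in> Cb G T nm"
  shows "(\<lambda>x. - f x) \<in> Cb G T nm"
  using Cb_diff[OF assms(1) Cb_const[OF assms(1,2), where c=0] assms(3)] by simp

lemma Cb_add:
  assumes "ultrametric nm" "carrier G \<subseteq> topspace T" "f \<in> Cb G T nm" "h \<in> Cb G T nm"
  shows "(\<lambda>x. f x + h x) \<in> Cb G T nm"
  using Cb_diff[OF assms(1,3) Cb_minus[OF assms(1,2,4)]] by simp

lemma Cb_sum:
  assumes "ultrametric nm" "carrier G \<subseteq> topspace T" "finite I" "\<And>i. i \<in> I \<Longrightarrow> F i \<in> Cb G T nm"
  shows "(\<lambda>x. \<Sum>i\<in>I. F i x) \<in> Cb G T nm"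
  using assms(3,4)
  by (induction I rule: finite_induct) (simp_all add: Cb_const Cb_add assms(1,2))

lemma Cb_cong:
  assumes "topspace T \<subseteq> carrier G" "f \<in> Cb G T nm" "\<And>x. x \<in> carrier G \<Longrightarrow> f x = h x"
  shows "h \<in> Cb G T nm"
proof -
  have "\<exists>U. openin T U \<and> x \<in> U \<and> (\<forall>y\<in>U. nm (h y - h x) < \<epsilon>)"
    if x: "x \<in> carrier G" and "\<epsilon> > 0" for x \<epsilon>
  proof -
    obtain U where U: "openin T U" "x \<in> U" "\<forall>y\<in>U. nm (f y - f x) < \<epsilon>"
      using CbD(1)[OF assms(2) x \<open>\<epsilon> > 0\<close>] by blast
    moreover have "U \<subseteq> carrier G"
      using openin_subset[OF U(1)] assms(1) by blast
    ultimately show ?thesis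
      using assms(3) x by (metis subsetD)
  qed
  moreover have "\<exists>B. \<forall>x\<in>carrier G. nm (h x) \<le> B"
    using CbD(2)[OF assms(2)] assms(3) by metis
  ultimately show ?thesis
    unfolding Cb_def by blast
qed

lemma dual_space_linear: "l \<in> dual_space av sc nm \<Longrightarrow> K_linear sc l"
  unfolding dual_space_def by blast

lemma K_linear_zero: "K_linear sc l \<Longrightarrow> l 0 = 0"
  unfolding K_linear_def by (metis add.right_neutral add_left_cancel)

lemma dual_space_le_op_norm:
  assumes "nonarch_abs av" "normed_KVS av sc nm" "l \<in> dual_space av sc nm"
  shows "av (l v) \<le> op_norm av nm l * nm v"
proof (cases "nm v = 0")
  case True
  then have "v = 0"
    using assms(2) unfolding normed_KVS_def by blast
  moreover have "av 0 = 0"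
    using assms(1) unfolding nonarch_abs_def by blast
  ultimately show ?thesis
    using K_linear_zero[OF dual_space_linear[OF assms(3)]] True by simp
next
  case False
  then have pos: "nm v > 0"
    using ultrametric_nonneg[OF normed_KVS_ultrametric[OF assms(1,2)], of v] by simp
  define S where "S = {C. C \<ge> 0 \<and> (\<forall>x. av (l x) \<le> C * nm x)}"
  have "S \<noteq> {}"
    using assms(3) unfolding dual_space_def S_def by auto
  then have "av (l v) / nm v \<le> Inf S"
    by (rule cInf_greatest) (use pos in \<open>auto simp: S_def divide_le_eq\<close>)
  then show ?thesis
    using pos unfolding op_norm_def S_def by (simp add: divide_le_eq)
qed

lemma op_norm_le:
  assumes "0 \<le> D" "\<And>x. av (l x) \<le> D * nm x"
  shows "op_norm av nm l \<le> D"
  unfolding op_norm_def by (rule cInf_lower) (use assms in \<open>auto intro: bdd_belowI[of _ 0]\<close>)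

definition prepend_coord :: "nat \<Rightarrow> 'g \<Rightarrow> (nat \<Rightarrow> 'g) \<Rightarrow> (nat \<Rightarrow> 'g)" where
  "prepend_coord n k x = (\<lambda>j\<in>{..Suc n}. if j = 0 then k else x (j - 1))"

abbreviation tuple_mult :: "('g, 'm) monoid_scheme \<Rightarrow> nat \<Rightarrow> (nat \<Rightarrow> 'g) \<Rightarrow> (nat \<Rightarrow> 'g) \<Rightarrow> (nat \<Rightarrow> 'g)" where
  "tuple_mult G n u x \<equiv> (\<lambda>i\<in>{..n}. u i \<otimes>\<^bsub>G\<^esub> x i)"

lemma prepend_coord_in_Gpow: "x \<in> Gpow G n \<Longrightarrow> k \<in> carrier G \<Longrightarrow> prepend_coord n k x \<in> Gpow G (Suc n)"
  unfolding prepend_coord_def by (auto simp: PiE_iff)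

lemma delete_coord_in_Gpow: "x \<in> Gpow G (Suc n) \<Longrightarrow> j \<le> Suc n \<Longrightarrow> delete_coord n j x \<in> Gpow G n"
  unfolding delete_coord_def by (auto simp: PiE_iff)

lemma delete_coord_prepend_coord_0:
  "x \<in> extensional {..Suc n} \<Longrightarrow> delete_coord (Suc n) 0 (prepend_coord (Suc n) k x) = x"
  unfolding delete_coord_def prepend_coord_def by (auto simp: fun_eq_iff extensional_def)

lemma delete_coord_prepend_coord_Suc:
  "delete_coord (Suc n) (Suc j) (prepend_coord (Suc n) k x) = prepend_coord n k (delete_coord n j x)"
  unfolding delete_coord_def prepend_coord_def by (auto simp: fun_eq_iff Suc_le_eq)

lemma coboundary_prepend_coord:
  assumes "x \<in> extensional {..Suc n}"
  shows "coboundary (Suc n) f (prepend_coord (Suc n) k x) = f x - coboundary n (\<lambda>y. f (prepend_coord n k y)) x"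
proof -
  define P where "P j = f (prepend_coord n k (delete_coord n j x))" for j
  have "coboundary (Suc n) f (prepend_coord (Suc n) k x) = f x + (\<Sum>j\<le>Suc n. if even (Suc j) then P j else - P j)"
    unfolding coboundary_def P_def
    by (subst sum.atMost_Suc_shift)
      (simp only: delete_coord_prepend_coord_0[OF assms] delete_coord_prepend_coord_Suc even_zero if_True)
  also have "(\<Sum>j\<le>Suc n. if even (Suc j) then P j else - P j) = - coboundary n (\<lambda>y. f (prepend_coord n k y)) x"
    unfolding coboundary_def P_def sum_negf[symmetric] by (rule sum.cong) auto
  finally show ?thesis
    by simp
qed

lemma tuple_mult_prepend_coord:
  "tuple_mult G (Suc n) u (prepend_coord n k x) = prepend_coord n (u 0 \<otimes>\<^bsub>G\<^esub> k) (tuple_mult G n (\<lambda>i. u (Suc i)) x)"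
  unfolding prepend_coord_def by (auto simp: fun_eq_iff)

lemma tuple_mult_prepend_coord_prepend_coord:
  "tuple_mult G (Suc n) (prepend_coord n a u) (prepend_coord n k x) = prepend_coord n (a \<otimes>\<^bsub>G\<^esub> k) (tuple_mult G n u x)"
  unfolding tuple_mult_prepend_coord by (simp add: prepend_coord_def cong: restrict_cong)

lemma tuple_mult_one: "monoid G \<Longrightarrow> x \<in> Gpow G n \<Longrightarrow> tuple_mult G n (\<lambda>i\<in>{..n}. \<one>\<^bsub>G\<^esub>) x = x"
  by (auto simp: fun_eq_iff PiE_iff extensional_def monoid.l_one)

lemma prepend_coord_one: "prepend_coord n k (\<lambda>i\<in>{..n}. k) = (\<lambda>i\<in>{..Suc n}. k)"
  unfolding prepend_coord_def by (auto simp: fun_eq_iff)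

lemma continuous_map_prepend_coord:
  assumes "continuous_map S T a" "continuous_map S (product_topology (\<lambda>_. T) {..n}) w"
  shows "continuous_map S (product_topology (\<lambda>_. T) {..Suc n}) (\<lambda>s. prepend_coord n (a s) (w s))"
  unfolding continuous_map_componentwise
proof (intro conjI ballI)
  show "(\<lambda>s. prepend_coord n (a s) (w s)) ` topspace S \<subseteq> extensional {..Suc n}"
    unfolding prepend_coord_def by auto
next
  fix i assume i: "i \<in> {..Suc n}"
  show "continuous_map S T (\<lambda>s. prepend_coord n (a s) (w s) i)"
  proof (cases "i = 0")
    case True
    then show ?thesis
      using assms(1) by (simp add: prepend_coord_def)
  next
    case False
    then have "i - 1 \<in> {..n}"
      using i by auto
    then have "continuous_map S T (\<lambda>s. w s (i - 1))"
      using continuous_map_compose[OF assms(2) continuous_map_product_projection] by (auto simp: o_def)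
    then show ?thesis
      using i False by (simp add: prepend_coord_def)
  qed
qed

lemma continuous_map_mult_right:
  assumes "topological_group G T" "c \<in> carrier G"
  shows "continuous_map T T (\<lambda>y. y \<otimes>\<^bsub>G\<^esub> c)"
proof -
  have "continuous_map T (prod_topology T T) (\<lambda>y. (y, c))"
    using assms unfolding topological_group_def by (intro continuous_map_pairedI) auto
  then show ?thesis
    using continuous_map_compose assms(1) unfolding topological_group_def by (fastforce simp: o_def)
qed

lemma LUCb_bounded: "f \<in> LUCb G T nm n \<Longrightarrow> \<exists>B. \<forall>x\<in>Gpow G n. nm (f x) \<le> B"
  unfolding LUCb_def by blast

lemma LUCb_pullback:
  assumes "f \<in> LUCb G T nm n" "continuous_map S (product_topology (\<lambda>_. T) {..n}) \<sigma>"
    and "s0 \<in> topspace S" "\<sigma> s0 = (\<lambda>i\<in>{..n}. \<one>\<^bsub>G\<^esub>)" "\<epsilon> > 0"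
  obtains W where "openin S W" "s0 \<in> W"
    "\<forall>x\<in>Gpow G n. \<forall>s\<in>W. nm (f x - f (tuple_mult G n (\<sigma> s) x)) < \<epsilon>"
proof -
  obtain U where "openin (product_topology (\<lambda>_. T) {..n}) U" "(\<lambda>i\<in>{..n}. \<one>\<^bsub>G\<^esub>) \<in> U"
    "\<forall>x\<in>Gpow G n. \<forall>u\<in>U. nm (f x - f (tuple_mult G n u x)) < \<epsilon>"
    using assms(1,5) unfolding LUCb_def by blast
  then show ?thesis
    using that[of "{s \<in> topspace S. \<sigma> s \<in> U}"] openin_continuous_map_preimage[OF assms(2)] assms(3,4)
    by auto
qed

lemma LUCb_prepend_coord_Cb:
  assumes "topological_group G T" "ultrametric nm" "f \<in> LUCb G T nm (Suc n)" "x \<in> Gpow G n"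
  shows "(\<lambda>k. f (prepend_coord n k x)) \<in> Cb G T nm"
proof -
  interpret group G
    using assms(1) unfolding topological_group_def by blast
  have carrier: "topspace T = carrier G"
    using assms(1) unfolding topological_group_def by blast
  have "\<exists>W. openin T W \<and> k0 \<in> W \<and> (\<forall>k\<in>W. nm (f (prepend_coord n k x) - f (prepend_coord n k0 x)) < \<epsilon>)"
    if k0: "k0 \<in> carrier G" and "\<epsilon> > 0" for k0 \<epsilon>
  proof -
    txt \<open>Moving the first coordinate from k0 to k is left multiplication by (k k0\<inverse>, 1, ..., 1).\<close>
    define \<sigma> where "\<sigma> k = prepend_coord n (k \<otimes>\<^bsub>G\<^esub> inv\<^bsub>G\<^esub> k0) (\<lambda>i\<in>{..n}. \<one>\<^bsub>G\<^esub>)" for k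
    have cont: "continuous_map T (product_topology (\<lambda>_. T) {..Suc n}) \<sigma>"
      unfolding \<sigma>_def using carrier k0
      by (intro continuous_map_prepend_coord continuous_map_mult_right[OF assms(1)]) (auto simp: PiE_iff)
    have "\<sigma> k0 = (\<lambda>i\<in>{..Suc n}. \<one>\<^bsub>G\<^esub>)"
      unfolding \<sigma>_def using k0 by (simp add: prepend_coord_one)
    moreover have "k0 \<in> topspace T"
      using k0 carrier by simp
    ultimately obtain W where W: "openin T W" "k0 \<in> W"
      "\<forall>z\<in>Gpow G (Suc n). \<forall>k\<in>W. nm (f z - f (tuple_mult G (Suc n) (\<sigma> k) z)) < \<epsilon>"
      using LUCb_pullback[OF assms(3) cont _ _ \<open>\<epsilon> > 0\<close>] by blast
    have "tuple_mult G (Suc n) (\<sigma> k) (prepend_coord n k0 x) = prepend_coord n k x" if "k \<in> W" for k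
    proof -
      have "k \<in> carrier G"
        using openin_subset[OF W(1)] carrier that by blast
      then show ?thesis
        unfolding \<sigma>_def tuple_mult_prepend_coord_prepend_coord using k0
        by (simp only: tuple_mult_one[OF monoid_axioms assms(4)]) (simp add: m_assoc)
    qed
    then show ?thesis
      using W prepend_coord_in_Gpow[OF assms(4) k0] ultrametric_diff_commute[OF assms(2)] by metis
  qed
  moreover obtain B where "\<forall>z\<in>Gpow G (Suc n). nm (f z) \<le> B"
    using LUCb_bounded[OF assms(3)] by blast
  then have "\<forall>k\<in>carrier G. nm (f (prepend_coord n k x)) \<le> B"
    using prepend_coord_in_Gpow[OF assms(4)] by blast
  ultimately show ?thesis
    unfolding Cb_def by blast
qed

locale invariant_mean =
  fixes G :: "('g, 'm) monoid_scheme" (structure) and T :: "'g topology" and av :: "'k::field \<Rightarrow> real"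
    and m :: "('g \<Rightarrow> 'k) \<Rightarrow> 'k" and C :: real
  assumes topological_group: "topological_group G T"
    and nonarch: "nonarch_abs av"
    and mean_add: "f \<in> Cb G T av \<Longrightarrow> h \<in> Cb G T av \<Longrightarrow> m (\<lambda>x. f x + h x) = m f + m h"
    and mean_scale: "f \<in> Cb G T av \<Longrightarrow> m (\<lambda>x. c * f x) = c * m f"
    and mean_bounded: "f \<in> Cb G T av \<Longrightarrow> av (m f) \<le> C * sup_norm G av f"
    and mean_one: "m (\<lambda>_. 1) = 1"
    and mean_invariant: "g \<in> carrier G \<Longrightarrow> f \<in> Cb G T av \<Longrightarrow> m (\<lambda>x. f (inv\<^bsub>G\<^esub> g \<otimes>\<^bsub>G\<^esub> x)) = m f"

lemma normed_K_amenable_invariant_mean: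
  assumes "normed_K_amenable G T av" "topological_group G T" "nonarch_abs av"
  obtains m C where "invariant_mean G T av m C"
  using assms unfolding normed_K_amenable_def invariant_mean_def Cb_K_eq_Cb by blast

context invariant_mean
begin

sublocale group G
  using topological_group unfolding topological_group_def by blast

lemma topspace_eq_carrier: "topspace T = carrier G"
  using topological_group unfolding topological_group_def by blast

lemma ultrametric_av: "ultrametric av"
  by (rule nonarch_abs_ultrametric[OF nonarch])

lemma Cb_av_const: "(\<lambda>_. c) \<in> Cb G T av"
  using Cb_const[OF ultrametric_av, of G T] topspace_eq_carrier by simp

lemma mean_constant_ge_one: "1 \<le> C"
proof -
  have "carrier G \<noteq> {}"
    by blast
  then show ?thesis
    using mean_bounded[OF Cb_av_const[of 1]] nonarch_abs_one[OF nonarch] mean_one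
    by (simp add: sup_norm_def)
qed

lemma mean_bound:
  assumes "f \<in> Cb G T av" "\<And>x. x \<in> carrier G \<Longrightarrow> av (f x) \<le> B"
  shows "av (m f) \<le> C * B"
proof -
  have "sup_norm G av f \<le> B"
    unfolding sup_norm_def using assms(2) by (auto intro: cSUP_least)
  then show ?thesis
    using mean_bounded[OF assms(1)] mean_constant_ge_one by (simp add: order_trans)
qed

lemma mean_diff:
  assumes "f \<in> Cb G T av" "h \<in> Cb G T av"
  shows "m (\<lambda>x. f x - h x) = m f - m h"
  using mean_add[OF Cb_diff[OF ultrametric_av assms] assms(2)] by simp

lemma mean_cong:
  assumes "f \<in> Cb G T av" "\<And>x. x \<in> carrier G \<Longrightarrow> f x = h x"
  shows "m f = m h"
proof -
  have h: "h \<in> Cb G T av"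
    using Cb_cong[OF _ assms] topspace_eq_carrier by simp
  have "av (m (\<lambda>x. f x - h x)) \<le> C * 0"
    using mean_bound[OF Cb_diff[OF ultrametric_av assms(1) h], of 0] assms(2) ultrametricD(1)[OF ultrametric_av]
    by simp
  then have "m (\<lambda>x. f x - h x) = 0"
    using nonarch ultrametric_nonneg[OF ultrametric_av] unfolding nonarch_abs_def
    by (metis mult_zero_right order_antisym)
  then show ?thesis
    using mean_diff[OF assms(1) h] by simp
qed

lemma mean_const: "m (\<lambda>_. c) = c"
  using mean_scale[OF Cb_av_const[of 1], of c] mean_one by simp

end

section \<open>Averaging in dual modules\<close>

locale dual_module_mean = invariant_mean G T av m C
  for G :: "('g, 'm) monoid_scheme" (structure) and T and av :: "'k::field \<Rightarrow> real" and m C +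
  fixes scE :: "'k \<Rightarrow> 'e::ab_group_add \<Rightarrow> 'e" and nE :: "'e \<Rightarrow> real" and actE :: "'g \<Rightarrow> 'e \<Rightarrow> 'e"
    and scV :: "'k \<Rightarrow> 'v::ab_group_add \<Rightarrow> 'v" and nV :: "'v \<Rightarrow> real" and actV :: "'g \<Rightarrow> 'v \<Rightarrow> 'v"
    and Phi :: "'e \<Rightarrow> 'v \<Rightarrow> 'k"
  assumes dual: "dual_KG_module_via G av scE nE actE scV nV actV Phi"
begin

lemma normed_KVS_E: "normed_KVS av scE nE"
  and normed_KVS_V: "normed_KVS av scV nV"
  using dual unfolding dual_KG_module_via_def normed_KG_module_def by blast+

lemma ultrametric_nE: "ultrametric nE"
  and ultrametric_nV: "ultrametric nV"
  using normed_KVS_ultrametric[OF nonarch] normed_KVS_E normed_KVS_V by blast+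

lemma Phi_in_dual_space: "Phi a \<in> dual_space av scV nV"
  using dual unfolding dual_KG_module_via_def bij_betw_def by blast

lemma Phi_inject: "Phi a = Phi b \<Longrightarrow> a = b"
  using dual unfolding dual_KG_module_via_def bij_betw_def inj_def by blast

lemma Phi_inv_into: "l \<in> dual_space av scV nV \<Longrightarrow> Phi (inv_into UNIV Phi l) = l"
  using dual unfolding dual_KG_module_via_def bij_betw_def by (auto intro: f_inv_into_f)

lemma Phi_add: "Phi (a + b) v = Phi a v + Phi b v"
  using dual unfolding dual_KG_module_via_def by metis

lemma Phi_diff: "Phi (a - b) v = Phi a v - Phi b v"
  using Phi_add[of "a - b" b v] by (simp add: eq_diff_eq)

lemma Phi_act: "g \<in> carrier G \<Longrightarrow> Phi (actE g a) v = Phi a (actV (inv g) v)"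
  using dual unfolding dual_KG_module_via_def dual_act_def by metis

lemma norm_eq_op_norm: "nE a = op_norm av nV (Phi a)"
  using dual unfolding dual_KG_module_via_def by blast

lemma pairing_le: "av (Phi a v) \<le> nE a * nV v"
  unfolding norm_eq_op_norm by (rule dual_space_le_op_norm[OF nonarch normed_KVS_V Phi_in_dual_space])

lemma norm_le_if_pairing_le: "0 \<le> D \<Longrightarrow> (\<And>v. av (Phi a v) \<le> D * nV v) \<Longrightarrow> nE a \<le> D"
  unfolding norm_eq_op_norm by (rule op_norm_le)

lemma Cb_pairing:
  assumes "F \<in> Cb G T nE"
  shows "(\<lambda>k. Phi (F k) v) \<in> Cb G T av"
proof -
  have nV: "0 \<le> nV v"
    by (rule ultrametric_nonneg[OF ultrametric_nV])
  have "\<exists>U. openin T U \<and> k0 \<in> U \<and> (\<forall>k\<in>U. av (Phi (F k) v - Phi (F k0) v) < \<epsilon>)"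
    if k0: "k0 \<in> carrier G" and "\<epsilon> > 0" for k0 \<epsilon>
  proof -
    define c where "c = \<epsilon> / (nV v + 1)"
    have "c > 0"
      unfolding c_def using \<open>\<epsilon> > 0\<close> nV by simp
    then obtain U where U: "openin T U" "k0 \<in> U" "\<forall>k\<in>U. nE (F k - F k0) < c"
      using CbD(1)[OF assms k0] by blast
    have "av (Phi (F k) v - Phi (F k0) v) < \<epsilon>" if "k \<in> U" for k
    proof -
      have "av (Phi (F k) v - Phi (F k0) v) \<le> nE (F k - F k0) * nV v"
        using pairing_le[of "F k - F k0" v] by (simp add: Phi_diff)
      also have "\<dots> \<le> c * nV v"
        using U(3) that nV by (simp add: less_imp_le mult_right_mono)
      also have "\<dots> < c * (nV v + 1)"
        using \<open>c > 0\<close> by simp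
      finally show ?thesis
        unfolding c_def using nV by simp
    qed
    then show ?thesis
      using U by blast
  qed
  moreover obtain B where "\<forall>k\<in>carrier G. nE (F k) \<le> B"
    using CbD(2)[OF assms] by blast
  then have "\<forall>k\<in>carrier G. av (Phi (F k) v) \<le> B * nV v"
    using pairing_le nV by (meson mult_right_mono order_trans)
  ultimately show ?thesis
    unfolding Cb_def by blast
qed

lemma carrier_subset_topspace: "carrier G \<subseteq> topspace T"
  using topspace_eq_carrier by simp

lemma mean_pairing_le:
  assumes "F \<in> Cb G T nE" "\<And>k. k \<in> carrier G \<Longrightarrow> nE (F k) \<le> B"
  shows "av (m (\<lambda>k. Phi (F k) v)) \<le> C * B * nV v"
proof -
  have "av (Phi (F k) v) \<le> B * nV v" if "k \<in> carrier G" for k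
    using pairing_le[of "F k" v] assms(2)[OF that] ultrametric_nonneg[OF ultrametric_nV]
    by (meson mult_right_mono order_trans)
  then show ?thesis
    using mean_bound[OF Cb_pairing[OF assms(1)]] by (simp add: mult.assoc)
qed

text \<open>Only meaningful for F in Cb G T nE; otherwise the functional need not lie in the dual
  space and inv_into returns an arbitrary element.\<close>

definition average :: "('g \<Rightarrow> 'e) \<Rightarrow> 'e" where
  "average F = inv_into UNIV Phi (\<lambda>v. m (\<lambda>k. Phi (F k) v))"

lemma Phi_average:
  assumes "F \<in> Cb G T nE"
  shows "Phi (average F) v = m (\<lambda>k. Phi (F k) v)"
proof -
  obtain B where B: "\<forall>k\<in>carrier G. nE (F k) \<le> B"
    using CbD(2)[OF assms] by blast
  then have "0 \<le> B"
    using ultrametric_nonneg[OF ultrametric_nE] by (meson one_closed order_trans)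
  then have "0 \<le> C * B"
    using mean_constant_ge_one by simp
  moreover have "K_linear scV (\<lambda>v. m (\<lambda>k. Phi (F k) v))"
    using dual_space_linear[OF Phi_in_dual_space]
    unfolding K_linear_def by (simp add: mean_add mean_scale Cb_pairing[OF assms])
  ultimately have "(\<lambda>v. m (\<lambda>k. Phi (F k) v)) \<in> dual_space av scV nV"
    unfolding dual_space_def using mean_pairing_le[OF assms] B by blast
  then show ?thesis
    unfolding average_def using Phi_inv_into by metis
qed

lemma average_eqI:
  assumes "F \<in> Cb G T nE" "\<And>v. m (\<lambda>k. Phi (F k) v) = Phi a v"
  shows "average F = a"
  using Phi_inject Phi_average[OF assms(1)] assms(2) by auto

lemma average_norm_le:
  assumes "F \<in> Cb G T nE" "\<And>k. k \<in> carrier G \<Longrightarrow> nE (F k) \<le> B"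
  shows "nE (average F) \<le> C * B"
proof (rule norm_le_if_pairing_le)
  show "0 \<le> C * B"
    using assms(2)[OF one_closed] ultrametric_nonneg[OF ultrametric_nE, of "F \<one>"] mean_constant_ge_one
    by simp
  show "av (Phi (average F) v) \<le> C * B * nV v" for v
    unfolding Phi_average[OF assms(1)] by (rule mean_pairing_le[OF assms])
qed

lemma average_const: "average (\<lambda>_. a) = a"
  by (rule average_eqI) (simp_all add: Cb_const ultrametric_nE carrier_subset_topspace mean_const)

lemma average_diff:
  assumes "F \<in> Cb G T nE" "H \<in> Cb G T nE"
  shows "average (\<lambda>k. F k - H k) = average F - average H"
  by (rule average_eqI)
    (simp_all add: Cb_diff ultrametric_nE assms Phi_diff mean_diff Cb_pairing Phi_average)

lemma average_minus:
  assumes "F \<in> Cb G T nE"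
  shows "average (\<lambda>k. - F k) = - average F"
  using average_diff[OF Cb_const[OF ultrametric_nE carrier_subset_topspace] assms, of 0]
  by (simp add: average_const)

lemma average_add:
  assumes "F \<in> Cb G T nE" "H \<in> Cb G T nE"
  shows "average (\<lambda>k. F k + H k) = average F + average H"
  using average_diff[OF assms(1) Cb_minus[OF ultrametric_nE carrier_subset_topspace assms(2)]]
  by (simp add: average_minus assms(2))

lemma average_sum:
  assumes "finite I" "\<And>i. i \<in> I \<Longrightarrow> F i \<in> Cb G T nE"
  shows "average (\<lambda>k. \<Sum>i\<in>I. F i k) = (\<Sum>i\<in>I. average (F i))"
  using assms
  by (induction I rule: finite_induct)
    (simp_all add: average_const average_add Cb_sum ultrametric_nE carrier_subset_topspace)

lemma average_cong:
  assumes "F \<in> Cb G T nE" "\<And>k. k \<in> carrier G \<Longrightarrow> F k = H k"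
  shows "average F = average H"
proof -
  have "H \<in> Cb G T nE"
    using Cb_cong[OF _ assms] topspace_eq_carrier by simp
  then show ?thesis
    using assms by (intro average_eqI) (auto simp: Phi_average intro: mean_cong Cb_pairing)
qed

lemma average_equivariant:
  assumes "F \<in> Cb G T nE" "H \<in> Cb G T nE" "g \<in> carrier G"
    and "\<And>k. k \<in> carrier G \<Longrightarrow> actE g (H k) = F (g \<otimes> k)"
  shows "actE g (average H) = average F"
proof (rule Phi_inject, rule ext)
  fix v
  have "Phi (actE g (average H)) v = m (\<lambda>k. Phi (H k) (actV (inv g) v))"
    using Phi_act[OF assms(3)] Phi_average[OF assms(2)] by simp
  also have "\<dots> = m (\<lambda>k. Phi (F (inv (inv g) \<otimes> k)) v)"
    using assms(3,4) Phi_act[OF assms(3), symmetric] by (intro mean_cong[OF Cb_pairing[OF assms(2)]]) simp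
  also have "\<dots> = m (\<lambda>k. Phi (F k) v)"
    using mean_invariant[OF inv_closed[OF assms(3)] Cb_pairing[OF assms(1)]] .
  also have "\<dots> = Phi (average F) v"
    using Phi_average[OF assms(1)] by simp
  finally show "Phi (actE g (average H)) v = Phi (average F) v" .
qed

end

section \<open>The contracting homotopy\<close>

context dual_module_mean
begin

lemma coboundary_average:
  assumes "\<And>y. y \<in> Gpow G n \<Longrightarrow> (\<lambda>k. F k y) \<in> Cb G T nE" "x \<in> Gpow G (Suc n)"
  shows "coboundary n (\<lambda>y. average (\<lambda>k. F k y)) x = average (\<lambda>k. coboundary n (F k) x)"
proof -
  define P where "P j k = F k (delete_coord n j x)" for j k
  have P: "P j \<in> Cb G T nE" if "j \<le> Suc n" for j
    unfolding P_def using assms(1)[OF delete_coord_in_Gpow[OF assms(2) that]] .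
  have signed: "(\<lambda>k. if even j then P j k else - P j k) \<in> Cb G T nE
      \<and> average (\<lambda>k. if even j then P j k else - P j k) = (if even j then average (P j) else - average (P j))"
    if "j \<le> Suc n" for j
    using P[OF that] by (cases "even j") (simp_all add: Cb_minus ultrametric_nE carrier_subset_topspace average_minus)
  have "coboundary n (\<lambda>y. average (\<lambda>k. F k y)) x = (\<Sum>j\<le>Suc n. if even j then average (P j) else - average (P j))"
    unfolding coboundary_def P_def by simp
  also have "\<dots> = (\<Sum>j\<le>Suc n. average (\<lambda>k. if even j then P j k else - P j k))"
    by (rule sum.cong) (use signed in auto)
  also have "\<dots> = average (\<lambda>k. \<Sum>j\<le>Suc n. if even j then P j k else - P j k)"
    by (rule average_sum[symmetric]) (use signed in auto)
  also have "\<dots> = average (\<lambda>k. coboundary n (F k) x)"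
    unfolding coboundary_def P_def ..
  finally show ?thesis .
qed

definition contracting_homotopy :: "nat \<Rightarrow> ((nat \<Rightarrow> 'g) \<Rightarrow> 'e) \<Rightarrow> (nat \<Rightarrow> 'g) \<Rightarrow> 'e" where
  "contracting_homotopy n f x = average (\<lambda>k. f (prepend_coord n k x))"

lemma Cb_prepend_coord: "f \<in> LUCb G T nE (Suc n) \<Longrightarrow> x \<in> Gpow G n \<Longrightarrow> (\<lambda>k. f (prepend_coord n k x)) \<in> Cb G T nE"
  by (rule LUCb_prepend_coord_Cb[OF topological_group ultrametric_nE])

lemma coboundary_contracting_homotopy:
  assumes "f \<in> LUCb G T nE (Suc n)" "\<forall>z\<in>Gpow G (Suc (Suc n)). coboundary (Suc n) f z = 0"
    and "x \<in> Gpow G (Suc n)"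
  shows "coboundary n (contracting_homotopy n f) x = f x"
proof -
  have "coboundary n (\<lambda>y. f (prepend_coord n k y)) x = f x" if "k \<in> carrier G" for k
    using coboundary_prepend_coord[of x n f k] assms(2,3) prepend_coord_in_Gpow[OF assms(3) that]
    by (simp add: PiE_iff)
  then have "average (\<lambda>_. f x) = average (\<lambda>k. coboundary n (\<lambda>y. f (prepend_coord n k y)) x)"
    by (intro average_cong) (simp_all add: Cb_const ultrametric_nE carrier_subset_topspace)
  then show ?thesis
    unfolding contracting_homotopy_def
    by (simp add: coboundary_average Cb_prepend_coord[OF assms(1)] assms(3) average_const)
qed

lemma contracting_homotopy_invariant:
  assumes "f \<in> LUCb G T nE (Suc n)" "G_invariant_cochain G actE (Suc n) f"
  shows "G_invariant_cochain G actE n (contracting_homotopy n f)"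
  unfolding G_invariant_cochain_def
proof (intro ballI)
  fix g x assume g: "g \<in> carrier G" and x: "x \<in> Gpow G n"
  define y where "y = tuple_mult G n (\<lambda>_. inv g) x"
  have y: "y \<in> Gpow G n"
    unfolding y_def using x g by (auto simp: PiE_iff)
  have "actE g (f (prepend_coord n k y)) = f (prepend_coord n (g \<otimes> k) x)" if k: "k \<in> carrier G" for k
  proof -
    have "tuple_mult G (Suc n) (\<lambda>_. inv g) (prepend_coord n (g \<otimes> k) x) = prepend_coord n k y"
      unfolding tuple_mult_prepend_coord y_def using g k by (simp add: m_assoc[symmetric])
    then show ?thesis
      using assms(2) g prepend_coord_in_Gpow[OF x] k unfolding G_invariant_cochain_def by (metis m_closed)
  qed
  then show "actE g (contracting_homotopy n f y) = contracting_homotopy n f x"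
    unfolding contracting_homotopy_def y_def[symmetric]
    by (intro average_equivariant Cb_prepend_coord[OF assms(1)] x y g)
qed


lemma contracting_homotopy_LUCb:
  assumes "f \<in> LUCb G T nE (Suc n)"
  shows "contracting_homotopy n f \<in> LUCb G T nE n"
proof -
  obtain B where B: "\<forall>z\<in>Gpow G (Suc n). nE (f z) \<le> B"
    using LUCb_bounded[OF assms] by blast
  have "nE (contracting_homotopy n f x) \<le> C * B" if "x \<in> Gpow G n" for x
    unfolding contracting_homotopy_def
    using B prepend_coord_in_Gpow[OF that] by (intro average_norm_le Cb_prepend_coord[OF assms that]) blast
  moreover have "\<exists>W. openin (product_topology (\<lambda>_. T) {..n}) W \<and> (\<lambda>i\<in>{..n}. \<one>) \<in> W \<and>
      (\<forall>x\<in>Gpow G n. \<forall>w\<in>W. nE (contracting_homotopy n f x - contracting_homotopy n f (tuple_mult G n w x)) < \<epsilon>)"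
    if "\<epsilon> > 0" for \<epsilon>
  proof -
    define \<sigma> where "\<sigma> w = prepend_coord n \<one> w" for w
    have cont: "continuous_map (product_topology (\<lambda>_. T) {..n}) (product_topology (\<lambda>_. T) {..Suc n}) \<sigma>"
      unfolding \<sigma>_def using topspace_eq_carrier by (intro continuous_map_prepend_coord) auto
    have ones: "(\<lambda>i\<in>{..n}. \<one>) \<in> topspace (product_topology (\<lambda>_. T) {..n})" "\<sigma> (\<lambda>i\<in>{..n}. \<one>) = (\<lambda>i\<in>{..Suc n}. \<one>)"
      unfolding \<sigma>_def using topspace_eq_carrier by (auto simp: prepend_coord_one)
    define c where "c = \<epsilon> / (2 * C)"
    have "c > 0" "C * c < \<epsilon>"
      unfolding c_def using \<open>\<epsilon> > 0\<close> mean_constant_ge_one by auto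
    then obtain W where W: "openin (product_topology (\<lambda>_. T) {..n}) W" "(\<lambda>i\<in>{..n}. \<one>) \<in> W"
      "\<forall>z\<in>Gpow G (Suc n). \<forall>w\<in>W. nE (f z - f (tuple_mult G (Suc n) (\<sigma> w) z)) < c"
      using LUCb_pullback[OF assms cont _ _ \<open>c > 0\<close>] ones by blast
    have "nE (contracting_homotopy n f x - contracting_homotopy n f (tuple_mult G n w x)) < \<epsilon>"
      if x: "x \<in> Gpow G n" and w: "w \<in> W" for x w
    proof -
      have "w \<in> Gpow G n"
        using openin_subset[OF W(1)] w topspace_eq_carrier by auto
      then have wx: "tuple_mult G n w x \<in> Gpow G n"
        using x by (auto simp: PiE_iff)
      have "nE (f (prepend_coord n k x) - f (prepend_coord n k (tuple_mult G n w x))) \<le> c"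
        if k: "k \<in> carrier G" for k
      proof -
        have "tuple_mult G (Suc n) (\<sigma> w) (prepend_coord n k x) = prepend_coord n k (tuple_mult G n w x)"
          unfolding \<sigma>_def tuple_mult_prepend_coord_prepend_coord using k by simp
        then show ?thesis
          using W(3) prepend_coord_in_Gpow[OF x k] w by (metis less_imp_le)
      qed
      then have "nE (average (\<lambda>k. f (prepend_coord n k x) - f (prepend_coord n k (tuple_mult G n w x)))) \<le> C * c"
        by (intro average_norm_le Cb_diff ultrametric_nE Cb_prepend_coord[OF assms] x wx)
      then show ?thesis
        unfolding contracting_homotopy_def
        using average_diff[OF Cb_prepend_coord[OF assms x] Cb_prepend_coord[OF assms wx]] \<open>C * c < \<epsilon>\<close>
        by simp
    qed
    then show ?thesis
      using W by blast
  qed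
  ultimately show ?thesis
    unfolding LUCb_def by blast
qed

end

theorem theorem7p4:
  fixes av :: "'k::field \<Rightarrow> real"
    and G :: "('g, 'm) monoid_scheme" and T :: "'g topology"
    and scE :: "'k \<Rightarrow> 'e::ab_group_add \<Rightarrow> 'e" and nE :: "'e \<Rightarrow> real" and actE :: "'g \<Rightarrow> 'e \<Rightarrow> 'e"
    and scV :: "'k \<Rightarrow> 'v::ab_group_add \<Rightarrow> 'v" and nV :: "'v \<Rightarrow> real" and actV :: "'g \<Rightarrow> 'v \<Rightarrow> 'v"
    and Phi :: "'e \<Rightarrow> 'v \<Rightarrow> 'k"
    and n :: nat
  assumes "nonarch_abs av"
    and "topological_group G T"
    and "locally_compact_space T"
    and "totally_disconnected_space T"
    and "normed_K_amenable G T av"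
    and "dual_KG_module_via G av scE nE actE scV nV actV Phi"
    and "n \<ge> 1"
  shows "lucb_cohomology_vanishes G T nE actE n"
proof -
  obtain m C where "invariant_mean G T av m C"
    using normed_K_amenable_invariant_mean[OF assms(5,2,1)] .
  then interpret dual_module_mean G T av m C scE nE actE scV nV actV Phi
    using assms(6) by (simp add: dual_module_mean_def dual_module_mean_axioms_def)
  obtain N where n: "n = Suc N"
    using assms(7) by (cases n) auto
  show ?thesis
    unfolding lucb_cohomology_vanishes_def n diff_Suc_1
    using contracting_homotopy_LUCb contracting_homotopy_invariant coboundary_contracting_homotopy
    by (metis (no_types, lifting))
qed

end
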